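(* Let $m\ge2$ be an integer, let $a,b\in\mathbb{Q}_m$ and $c=a+b$. Let $\{s_n(a)\}_{n\ge0}$, $\{s_n(b)\}_{n\ge0}$, $\{s_n(c)\}_{n\ge0}$ be sequences with values in $\{0,1,\dots,m-1\}$ such that $a=\sum_{n=0}^\infty\left(\frac{m}{m+1}\right)^n s_n(a)$, $b=\sum_{n=0}^\infty\left(\frac{m}{m+1}\right)^n s_n(b)$ and $c=\sum_{n=0}^\infty\left(\frac{m}{m+1}\right)^n s_n(c)$ in $\mathbb{Q}_m$. Define $\kappa_0=0$ and, for $n\ge0$, $$\kappa_{n+1}=\kappa_n+\left\lfloor\frac{s_n(a)+s_n(b)+\kappa_n}{m}\right\rfloor.$$ Then $s_n(c)\equiv s_n(a)+s_n(b)+\kappa_n\pmod m$ for every $n\ge0$.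
   Context: $D_m$ is the set of rationals $a/b$ (with $a,b$ coprime integers) such that $\gcd(b,m)=1$; it is a subring of $\mathbb{Q}$. For $a/b\in D_m$ in lowest terms, $|a/b|_m=m^{-k}$ where $k$ is the largest integer with $m^k\mid a$, and $|0|_m=0$; the metric is $d(u,v)=|u-v|_m$. $\mathbb{Q}_m$ is the Cauchy completion of $(D_m,d)$, with ring operations extended by continuity; $D_m$ is identified with its image in $\mathbb{Q}_m$. *)

theory Defs
  imports Complex_Main "HOL-Number_Theory.Cong"
begin

definition inD :: "int \<Rightarrow> rat \<Rightarrow> bool" where
  "inD m q = coprime (snd (quotient_of q)) m"

definition madic_abs :: "int \<Rightarrow> rat \<Rightarrow> real" where
  "madic_abs m q = (let a = fst (quotient_of q) in
     if a = 0 then 0 else (1 / real_of_int m) ^ (GREATEST k. m ^ k dvd a))"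

definition mcauchy :: "int \<Rightarrow> (nat \<Rightarrow> rat) \<Rightarrow> bool" where
  "mcauchy m X \<longleftrightarrow> (\<forall>n. inD m (X n)) \<and>
     (\<forall>e>0. \<exists>N. \<forall>i\<ge>N. \<forall>j\<ge>N. madic_abs m (X i - X j) < e)"

definition mequiv :: "int \<Rightarrow> (nat \<Rightarrow> rat) \<Rightarrow> (nat \<Rightarrow> rat) \<Rightarrow> bool" where
  "mequiv m X Y \<longleftrightarrow> (\<lambda>n. madic_abs m (X n - Y n)) \<longlonglongrightarrow> 0"

definition qm_class :: "int \<Rightarrow> (nat \<Rightarrow> rat) \<Rightarrow> (nat \<Rightarrow> rat) set" where
  "qm_class m X = {Y. mcauchy m Y \<and> mequiv m X Y}"

definition Qm :: "int \<Rightarrow> (nat \<Rightarrow> rat) set set" where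
  "Qm m = {qm_class m X | X. mcauchy m X}"

definition qm_rep :: "(nat \<Rightarrow> rat) set \<Rightarrow> (nat \<Rightarrow> rat)" where
  "qm_rep A = (SOME X. X \<in> A)"

definition qm_add :: "int \<Rightarrow> (nat \<Rightarrow> rat) set \<Rightarrow> (nat \<Rightarrow> rat) set \<Rightarrow> (nat \<Rightarrow> rat) set" where
  "qm_add m A B = qm_class m (\<lambda>n. qm_rep A n + qm_rep B n)"

definition qm_of :: "int \<Rightarrow> rat \<Rightarrow> (nat \<Rightarrow> rat) set" where
  "qm_of m q = qm_class m (\<lambda>_. q)"

definition qm_dist :: "int \<Rightarrow> (nat \<Rightarrow> rat) set \<Rightarrow> (nat \<Rightarrow> rat) set \<Rightarrow> real" where
  "qm_dist m A B = lim (\<lambda>n. madic_abs m (qm_rep A n - qm_rep B n))"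

definition qm_series_eq :: "int \<Rightarrow> (nat \<Rightarrow> int) \<Rightarrow> (nat \<Rightarrow> rat) set \<Rightarrow> bool" where
  "qm_series_eq m s A \<longleftrightarrow>
     (\<lambda>N. qm_dist m (qm_of m (\<Sum>n<N. (of_int m / (of_int m + 1)) ^ n * of_int (s n))) A)
       \<longlonglongrightarrow> 0"

primrec carry :: "int \<Rightarrow> (nat \<Rightarrow> int) \<Rightarrow> (nat \<Rightarrow> int) \<Rightarrow> nat \<Rightarrow> int" where
  "carry m sa sb 0 = 0"
| "carry m sa sb (Suc n) = carry m sa sb n +
     \<lfloor>(of_int (sa n + sb n + carry m sa sb n) :: rat) / of_int m\<rfloor>"

end

theory Submission
  imports Defs
begin

text \<open>Write \<open>r = m/(m+1)\<close>. Adding digits position by position,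
  \<open>s\<^sub>n(a) + s\<^sub>n(b) + \<kappa>\<^sub>n = d\<^sub>n + m q\<^sub>n\<close> with \<open>0 \<le> d\<^sub>n < m\<close> and \<open>\<kappa>\<^sub>n\<^sub>+\<^sub>1 = \<kappa>\<^sub>n + q\<^sub>n\<close>;
  the identity \<open>m r^n = (m+1) r^(n+1)\<close> shows that the \<open>N\<close>-th partial sums of \<open>a\<close> and \<open>b\<close>
  add up to the \<open>N\<close>-th partial sum with digits \<open>d\<^sub>n\<close> plus the remainder \<open>(m+1) \<kappa>\<^sub>N r^N\<close>,
  whose \<open>m\<close>-adic absolute value is at most \<open>m^(-N)\<close>. Hence the partial sums of
  \<open>\<Sum> r^n (s\<^sub>n(c) - d\<^sub>n)\<close> tend to \<open>0\<close> in \<open>Q\<^sub>m\<close>. Since \<open>r^n\<close> has \<open>m\<close>-adic valuation exactly \<open>n\<close>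
  and \<open>|s\<^sub>n(c) - d\<^sub>n| < m\<close>, a first nonzero difference at position \<open>k\<close> would keep these
  partial sums at absolute value \<open>m^(-k)\<close>; so \<open>s\<^sub>n(c) = d\<^sub>n\<close> for all \<open>n\<close>.\<close>

lemma inD_iff_fraction:
  "inD m x \<longleftrightarrow> (\<exists>p q. q > 0 \<and> coprime q m \<and> x = of_int p / of_int q)"
proof
  assume "inD m x"
  obtain a b where ab: "quotient_of x = (a, b)" by (cases "quotient_of x")
  then have "b > 0" "x = of_int a / of_int b" "coprime b m"
    using \<open>inD m x\<close> quotient_of_denom_pos quotient_of_div unfolding inD_def by auto
  then show "\<exists>p q. q > 0 \<and> coprime q m \<and> x = of_int p / of_int q" by blast
next
  assume "\<exists>p q. q > 0 \<and> coprime q m \<and> x = of_int p / of_int q"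
  then obtain p q where pq: "q > 0" "coprime q m" "x = of_int p / of_int q" by blast
  obtain a b where ab: "quotient_of x = (a, b)" by (cases "quotient_of x")
  have b: "b > 0" "coprime a b" "x = of_int a / of_int b"
    using ab quotient_of_denom_pos quotient_of_coprime quotient_of_div by blast+
  have "of_int (a * q) = (of_int (p * b) :: rat)" using pq b by (simp add: field_simps)
  then have "b dvd a * q" by (metis dvd_triv_right of_int_eq_iff)
  with b(2) have "b dvd q" by (metis coprime_commute coprime_dvd_mult_right_iff)
  with pq(2) have "coprime b m" by (meson coprime_commute coprime_imp_coprime dvd_trans)
  then show "inD m x" unfolding inD_def using ab by simp
qed

lemma inD_of_int: "inD m (of_int n)"
  unfolding inD_iff_fraction by (rule exI[of _ n], rule exI[of _ 1]) simp

lemma inD_add: "inD m x \<Longrightarrow> inD m y \<Longrightarrow> inD m (x + y)"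
  and inD_mult: "inD m x \<Longrightarrow> inD m y \<Longrightarrow> inD m (x * y)"
proof -
  assume "inD m x" "inD m y"
  then obtain p1 q1 p2 q2 where h: "q1 > 0" "coprime q1 m" "x = of_int p1 / of_int q1"
     "q2 > 0" "coprime q2 m" "y = of_int p2 / of_int q2" unfolding inD_iff_fraction by blast
  then have "x + y = of_int (p1 * q2 + p2 * q1) / of_int (q1 * q2)"
    and "x * y = of_int (p1 * p2) / of_int (q1 * q2)"
    and "q1 * q2 > 0" "coprime (q1 * q2) m" by (auto simp: field_simps)
  then show "inD m (x + y)" "inD m (x * y)" unfolding inD_iff_fraction by blast+
qed

lemma inD_uminus: "inD m x \<Longrightarrow> inD m (- x)"
  using inD_mult[OF inD_of_int[of m "-1"]] by simp

lemma inD_diff: "inD m x \<Longrightarrow> inD m y \<Longrightarrow> inD m (x - y)"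
  using inD_add[OF _ inD_uminus] by simp

lemma inD_power: "inD m x \<Longrightarrow> inD m (x ^ n)"
  by (induction n) (auto intro: inD_mult simp: inD_of_int[of m 1, simplified])

lemma inD_inverse_plus_one: "m \<ge> 0 \<Longrightarrow> inD m (1 / (of_int m + 1))"
  unfolding inD_iff_fraction by (rule exI[of _ 1], rule exI[of _ "m + 1"]) simp

lemma dvd_if_of_int_eq_mult_inD:
  assumes "inD m u" "of_int e = of_int m * u"
  shows "m dvd e"
proof -
  obtain p q where pq: "q > 0" "coprime q m" "u = of_int p / of_int q"
    using assms(1) unfolding inD_iff_fraction by blast
  then have "of_int (e * q) = (of_int (m * p) :: rat)" using assms(2) by simp
  then have "m dvd e * q" by (metis dvd_triv_left of_int_eq_iff)
  with pq(2) show ?thesis by (metis coprime_commute coprime_dvd_mult_left_iff)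
qed

definition mval_ge :: "int \<Rightarrow> nat \<Rightarrow> rat \<Rightarrow> bool" where
  "mval_ge m j x \<longleftrightarrow> (\<exists>y. inD m y \<and> x = of_int m ^ j * y)"

lemma mval_ge_imp_inD: "mval_ge m j x \<Longrightarrow> inD m x"
  unfolding mval_ge_def using inD_mult inD_power inD_of_int by metis

lemma mval_ge_0_iff: "mval_ge m 0 x \<longleftrightarrow> inD m x"
  unfolding mval_ge_def by simp

lemma mval_ge_zero: "mval_ge m j 0"
  unfolding mval_ge_def using inD_of_int[of m 0] by (intro exI[of _ 0]) simp

lemma mval_ge_add: "mval_ge m j x \<Longrightarrow> mval_ge m j y \<Longrightarrow> mval_ge m j (x + y)"
  unfolding mval_ge_def by (metis distrib_left inD_add)

lemma mval_ge_uminus_iff: "mval_ge m j (- x) \<longleftrightarrow> mval_ge m j x"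
  unfolding mval_ge_def by (metis inD_uminus minus_minus mult_minus_right)

lemma mval_ge_diff: "mval_ge m j x \<Longrightarrow> mval_ge m j y \<Longrightarrow> mval_ge m j (x - y)"
  using mval_ge_add[of m j x "- y"] mval_ge_uminus_iff by simp

lemma mval_ge_mono:
  assumes "j \<le> k" "mval_ge m k x"
  shows "mval_ge m j x"
proof -
  obtain y where y: "inD m y" "x = of_int m ^ k * y" using assms(2) unfolding mval_ge_def by blast
  then have "x = of_int m ^ j * (of_int m ^ (k - j) * y)"
    using assms(1) by (simp add: power_add[symmetric])
  moreover have "inD m (of_int m ^ (k - j) * y)" using y inD_mult inD_power inD_of_int by metis
  ultimately show ?thesis unfolding mval_ge_def by blast
qed

lemma mval_ge_sum:
  fixes N :: nat
  shows "(\<And>n. n < N \<Longrightarrow> mval_ge m j (f n)) \<Longrightarrow> mval_ge m j (\<Sum>n<N. f n)"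
  by (induction N) (auto intro: mval_ge_add simp: mval_ge_zero)

lemma mval_ge_digit_term:
  assumes "m \<ge> 0"
  shows "mval_ge m n ((of_int m / (of_int m + 1)) ^ n * of_int e)"
proof -
  have "(of_int m / (of_int m + 1)) ^ n * of_int e
      = of_int m ^ n * ((1 / (of_int m + (1::rat))) ^ n * of_int e)"
    by (simp add: power_divide)
  moreover have "inD m ((1 / (of_int m + (1::rat))) ^ n * of_int e)"
    using inD_mult inD_power inD_of_int inD_inverse_plus_one[OF assms] by metis
  ultimately show ?thesis unfolding mval_ge_def by blast
qed

lemma mval_ge_iff_dvd_numerator:
  assumes "quotient_of x = (a, b)" "inD m x"
  shows "mval_ge m j x \<longleftrightarrow> m ^ j dvd a"
proof
  assume "mval_ge m j x"
  then obtain y where y: "inD m y" "x = of_int m ^ j * y" unfolding mval_ge_def by blast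
  then obtain p q where pq: "q > 0" "coprime q m" "y = of_int p / of_int q"
    unfolding inD_iff_fraction by blast
  have b: "b > 0" "x = of_int a / of_int b"
    using assms quotient_of_denom_pos quotient_of_div by blast+
  then have "of_int (a * q) = (of_int (m ^ j * p * b) :: rat)"
    using y pq by (simp add: frac_eq_eq)
  then have "m ^ j dvd a * q" by (metis dvd_mult2 dvd_triv_left mult.assoc of_int_eq_iff)
  moreover have "coprime (m ^ j) q" using pq(2) by (simp add: coprime_commute)
  ultimately show "m ^ j dvd a" using coprime_dvd_mult_left_iff by blast
next
  assume "m ^ j dvd a"
  then obtain a' where a': "a = m ^ j * a'" by blast
  have "b > 0" "x = of_int a / of_int b" "coprime b m"
    using assms quotient_of_denom_pos quotient_of_div unfolding inD_def by auto
  then have "x = of_int m ^ j * (of_int a' / of_int b)" "inD m (of_int a' / of_int b)"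
    using a' unfolding inD_iff_fraction by auto
  then show "mval_ge m j x" unfolding mval_ge_def by blast
qed

lemma pow_dvd_imp_exponent_le:
  fixes m a :: int
  assumes "m \<ge> 2" "a \<noteq> 0" "m ^ j dvd a"
  shows "j \<le> nat \<bar>a\<bar>"
proof -
  have "int j < 2 ^ j" using less_exp[of j] by (metis of_nat_less_iff of_nat_numeral of_nat_power)
  also have "\<dots> \<le> m ^ j" using assms(1) by (intro power_mono) auto
  also have "\<dots> \<le> \<bar>a\<bar>" using assms dvd_imp_le_int[of a "m ^ j"] by simp
  finally show ?thesis by linarith
qed

lemma mval_ge_bounded:
  assumes "m \<ge> 2" "x \<noteq> 0" "mval_ge m j x"
  shows "j \<le> nat \<bar>fst (quotient_of x)\<bar>"
proof -
  obtain a b where ab: "quotient_of x = (a, b)" by (cases "quotient_of x")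
  then have "a \<noteq> 0" using assms(2) quotient_of_div by fastforce
  then show ?thesis
    using pow_dvd_imp_exponent_le[OF assms(1)] mval_ge_iff_dvd_numerator[OF ab mval_ge_imp_inD[OF assms(3)]]
      assms(3) ab by simp
qed

lemma madic_abs_eq_Greatest_mval_ge:
  assumes "inD m x" "x \<noteq> 0"
  shows "madic_abs m x = (1 / real_of_int m) ^ (GREATEST j. mval_ge m j x)"
proof -
  obtain a b where ab: "quotient_of x = (a, b)" by (cases "quotient_of x")
  then have "a \<noteq> 0" using assms(2) quotient_of_div by fastforce
  moreover have "(GREATEST k. m ^ k dvd a) = (GREATEST j. mval_ge m j x)"
    using mval_ge_iff_dvd_numerator[OF ab assms(1)] by simp
  ultimately show ?thesis unfolding madic_abs_def using ab by simp
qed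

lemma mval_ge_Greatest:
  assumes "m \<ge> 2" "inD m x" "x \<noteq> 0"
  shows "mval_ge m (GREATEST j. mval_ge m j x) x"
  using GreatestI_nat[of "\<lambda>j. mval_ge m j x" 0] mval_ge_bounded[OF assms(1,3)]
    mval_ge_0_iff assms(2) by blast

lemma le_Greatest_mval_ge:
  assumes "m \<ge> 2" "x \<noteq> 0" "mval_ge m k x"
  shows "k \<le> (GREATEST j. mval_ge m j x)"
  using Greatest_le_nat[of "\<lambda>j. mval_ge m j x" k] mval_ge_bounded[OF assms(1,2)] assms(3)
  by blast

lemma madic_abs_zero [simp]: "madic_abs m 0 = 0"
  unfolding madic_abs_def by simp

lemma madic_abs_nonneg: "m \<ge> 0 \<Longrightarrow> madic_abs m x \<ge> 0"
  unfolding madic_abs_def Let_def by auto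

lemma madic_abs_le_if_mval_ge:
  assumes "m \<ge> 2" "mval_ge m k x"
  shows "madic_abs m x \<le> (1 / real_of_int m) ^ k"
proof (cases "x = 0")
  case False
  then have "k \<le> (GREATEST j. mval_ge m j x)" using le_Greatest_mval_ge assms by blast
  then have "(1 / real_of_int m) ^ (GREATEST j. mval_ge m j x) \<le> (1 / real_of_int m) ^ k"
    using assms(1) by (simp add: power_decreasing)
  then show ?thesis using madic_abs_eq_Greatest_mval_ge[OF mval_ge_imp_inD[OF assms(2)] False] by simp
qed (use assms(1) in simp)

lemma madic_abs_eq_if_exact_mval:
  assumes "mval_ge m k x" "\<not> mval_ge m (Suc k) x"
  shows "madic_abs m x = (1 / real_of_int m) ^ k"
proof -
  have "(GREATEST j. mval_ge m j x) = k"
  proof (rule Greatest_equality)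
    fix j assume "mval_ge m j x"
    then show "j \<le> k" using mval_ge_mono[of "Suc k" j m x] assms(2) by (cases "j \<le> k") auto
  qed fact
  moreover have "x \<noteq> 0" using assms(2) mval_ge_zero by blast
  ultimately show ?thesis using madic_abs_eq_Greatest_mval_ge[OF mval_ge_imp_inD[OF assms(1)]] by simp
qed

lemma madic_abs_uminus:
  assumes "inD m x"
  shows "madic_abs m (- x) = madic_abs m x"
proof (cases "x = 0")
  case False
  then show ?thesis
    using madic_abs_eq_Greatest_mval_ge[OF assms False] inD_uminus[OF assms]
      madic_abs_eq_Greatest_mval_ge[of m "- x"] by (simp add: mval_ge_uminus_iff)
qed simp

lemma madic_abs_diff_commute:
  assumes "inD m x" "inD m y"
  shows "madic_abs m (x - y) = madic_abs m (y - x)"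
  using madic_abs_uminus[OF inD_diff[OF assms]] by simp

lemma madic_abs_add_le_max:
  assumes "m \<ge> 2" "inD m x" "inD m y"
  shows "madic_abs m (x + y) \<le> max (madic_abs m x) (madic_abs m y)"
proof -
  have ultra: "madic_abs m (x + y) \<le> madic_abs m x"
    if "inD m x" "inD m y" "x \<noteq> 0" "y \<noteq> 0"
      "(GREATEST j. mval_ge m j x) \<le> (GREATEST j. mval_ge m j y)" for x y
  proof -
    let ?i = "GREATEST j. mval_ge m j x"
    have "mval_ge m ?i (x + y)"
      using mval_ge_add mval_ge_Greatest[OF assms(1)] mval_ge_mono that by metis
    then show ?thesis
      using madic_abs_le_if_mval_ge[OF assms(1)] madic_abs_eq_Greatest_mval_ge that by simp
  qed
  show ?thesis
  proof (cases "x = 0 \<or> y = 0")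
    case False
    then show ?thesis
      using ultra[OF assms(2,3)] ultra[OF assms(3,2)] by (fastforce simp: add.commute)
  qed auto
qed

lemma madic_abs_triangle:
  assumes "m \<ge> 2" "inD m x" "inD m y"
  shows "madic_abs m (x + y) \<le> madic_abs m x + madic_abs m y"
  using madic_abs_add_le_max[OF assms] madic_abs_nonneg[of m x] madic_abs_nonneg[of m y] assms(1)
  by (simp add: max_def split: if_splits)

lemma madic_abs_diff_triangle:
  assumes "m \<ge> 2" "inD m x" "inD m y" "inD m z"
  shows "madic_abs m (x - z) \<le> madic_abs m (x - y) + madic_abs m (y - z)"
  using madic_abs_triangle[OF assms(1) inD_diff[OF assms(2,3)] inD_diff[OF assms(3,4)]] by simp

lemma madic_abs_reverse_triangle:
  assumes "m \<ge> 2" "inD m x" "inD m y"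
  shows "\<bar>madic_abs m x - madic_abs m y\<bar> \<le> madic_abs m (x - y)"
  using madic_abs_diff_triangle[OF assms(1,2,3) inD_of_int[of m 0]]
    madic_abs_diff_triangle[OF assms(1,3,2) inD_of_int[of m 0]]
    madic_abs_diff_commute[OF assms(2,3)] by simp

lemma mcauchy_inD: "mcauchy m X \<Longrightarrow> inD m (X n)"
  unfolding mcauchy_def by blast

lemma mcauchy_pair_small:
  assumes "mcauchy m X" "mcauchy m Y" "e > 0"
  obtains N where "\<And>i j. N \<le> i \<Longrightarrow> N \<le> j \<Longrightarrow>
    madic_abs m (X i - X j) + madic_abs m (Y i - Y j) < e"
proof -
  obtain N1 where N1: "\<forall>i\<ge>N1. \<forall>j\<ge>N1. madic_abs m (X i - X j) < e / 2"
    using assms(1,3) unfolding mcauchy_def by (meson half_gt_zero)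
  obtain N2 where N2: "\<forall>i\<ge>N2. \<forall>j\<ge>N2. madic_abs m (Y i - Y j) < e / 2"
    using assms(2,3) unfolding mcauchy_def by (meson half_gt_zero)
  show ?thesis
  proof (rule that[of "max N1 N2"])
    fix i j assume "max N1 N2 \<le> i" "max N1 N2 \<le> j"
    then show "madic_abs m (X i - X j) + madic_abs m (Y i - Y j) < e"
      using N1 N2 by force
  qed
qed

lemma mcauchy_add:
  assumes "m \<ge> 2" "mcauchy m X" "mcauchy m Y"
  shows "mcauchy m (\<lambda>n. X n + Y n)"
  unfolding mcauchy_def
proof (intro conjI allI impI)
  note D = mcauchy_inD[OF assms(2)] mcauchy_inD[OF assms(3)]
  show "inD m (X n + Y n)" for n using D inD_add by blast
  fix e :: real assume "e > 0"
  then obtain N where N: "\<And>i j. N \<le> i \<Longrightarrow> N \<le> j \<Longrightarrow>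
      madic_abs m (X i - X j) + madic_abs m (Y i - Y j) < e"
    using mcauchy_pair_small assms(2,3) by blast
  have "madic_abs m (X i + Y i - (X j + Y j)) < e" if "N \<le> i" "N \<le> j" for i j
    using madic_abs_triangle[OF assms(1) inD_diff inD_diff, of "X i" "X j" "Y i" "Y j"] D N[OF that]
    by (simp add: algebra_simps)
  then show "\<exists>N. \<forall>i\<ge>N. \<forall>j\<ge>N. madic_abs m (X i + Y i - (X j + Y j)) < e" by blast
qed

lemma mcauchy_madic_abs_diff_convergent:
  assumes "m \<ge> 2" "mcauchy m X" "mcauchy m Y"
  shows "(\<lambda>n. madic_abs m (X n - Y n)) \<longlonglongrightarrow> lim (\<lambda>n. madic_abs m (X n - Y n))"
proof -
  note D = mcauchy_inD[OF assms(2)] mcauchy_inD[OF assms(3)]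
  have "Cauchy (\<lambda>n. madic_abs m (X n - Y n))"
  proof (rule metric_CauchyI)
    fix e :: real assume "e > 0"
    then obtain N where N: "\<And>i j. N \<le> i \<Longrightarrow> N \<le> j \<Longrightarrow>
        madic_abs m (X i - X j) + madic_abs m (Y i - Y j) < e"
      using mcauchy_pair_small assms(2,3) by blast
    have "dist (madic_abs m (X i - Y i)) (madic_abs m (X j - Y j)) < e"
      if "N \<le> i" "N \<le> j" for i j
    proof -
      have "dist (madic_abs m (X i - Y i)) (madic_abs m (X j - Y j))
          \<le> madic_abs m ((X i - X j) + - (Y i - Y j))"
        using madic_abs_reverse_triangle[OF assms(1) inD_diff inD_diff, of "X i" "Y i" "X j" "Y j"] D
        by (simp add: dist_real_def algebra_simps)
      also have "\<dots> \<le> madic_abs m (X i - X j) + madic_abs m (Y i - Y j)"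
        using madic_abs_triangle[OF assms(1) inD_diff inD_uminus[OF inD_diff], of "X i" "X j" "Y i" "Y j"]
          madic_abs_uminus[OF inD_diff, of m "Y i" "Y j"] D by simp
      finally show ?thesis using N[OF that] by linarith
    qed
    then show "\<exists>M. \<forall>i\<ge>M. \<forall>j\<ge>M. dist (madic_abs m (X i - Y i)) (madic_abs m (X j - Y j)) < e"
      by blast
  qed
  then show ?thesis using Cauchy_convergent convergent_LIMSEQ_iff by blast
qed

lemma qm_rep_in_qm_class: "mcauchy m X \<Longrightarrow> qm_rep (qm_class m X) \<in> qm_class m X"
  unfolding qm_rep_def by (rule someI[of _ X]) (simp add: qm_class_def mequiv_def)

lemma mcauchy_qm_rep: "A \<in> Qm m \<Longrightarrow> mcauchy m (qm_rep A)"
  unfolding Qm_def using qm_rep_in_qm_class unfolding qm_class_def by blast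

lemma qm_add_in_Qm:
  assumes "m \<ge> 2" "a \<in> Qm m" "b \<in> Qm m"
  shows "qm_add m a b \<in> Qm m"
proof -
  have "mcauchy m (\<lambda>n. qm_rep a n + qm_rep b n)"
    by (rule mcauchy_add[OF assms(1) mcauchy_qm_rep[OF assms(2)] mcauchy_qm_rep[OF assms(3)]])
  then show ?thesis unfolding qm_add_def Qm_def by blast
qed

lemma qm_rep_qm_add:
  assumes "m \<ge> 2" "a \<in> Qm m" "b \<in> Qm m"
  shows "(\<lambda>n. madic_abs m (qm_rep a n + qm_rep b n - qm_rep (qm_add m a b) n)) \<longlonglongrightarrow> 0"
proof -
  have "mcauchy m (\<lambda>n. qm_rep a n + qm_rep b n)"
    by (rule mcauchy_add[OF assms(1) mcauchy_qm_rep[OF assms(2)] mcauchy_qm_rep[OF assms(3)]])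
  from qm_rep_in_qm_class[OF this] show ?thesis
    unfolding qm_add_def qm_class_def mequiv_def by simp
qed

lemma qm_dist_qm_of_tendsto:
  assumes "m \<ge> 2" "T \<in> Qm m" "inD m q"
  shows "(\<lambda>n. madic_abs m (q - qm_rep T n)) \<longlonglongrightarrow> qm_dist m (qm_of m q) T"
proof -
  define R where "R = qm_rep (qm_of m q)"
  define Z where "Z = qm_rep T"
  have "R \<in> qm_class m (\<lambda>_. q)"
    using qm_rep_in_qm_class[of m "\<lambda>_. q"] assms(3) unfolding R_def qm_of_def mcauchy_def by simp
  then have R: "mcauchy m R" "(\<lambda>n. madic_abs m (q - R n)) \<longlonglongrightarrow> 0"
    unfolding qm_class_def mequiv_def by auto
  have Z: "mcauchy m Z" unfolding Z_def by (rule mcauchy_qm_rep[OF assms(2)])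
  have lim: "(\<lambda>n. madic_abs m (R n - Z n)) \<longlonglongrightarrow> qm_dist m (qm_of m q) T"
    using mcauchy_madic_abs_diff_convergent[OF assms(1) R(1) Z] unfolding qm_dist_def R_def Z_def .
  have "\<bar>madic_abs m (q - Z n) - madic_abs m (R n - Z n)\<bar> \<le> madic_abs m (q - R n)" for n
  proof -
    have "inD m (q - Z n)" "inD m (R n - Z n)"
      using assms(3) mcauchy_inD[OF R(1)] mcauchy_inD[OF Z] inD_diff by blast+
    from madic_abs_reverse_triangle[OF assms(1) this] show ?thesis by simp
  qed
  then have "(\<lambda>n. \<bar>madic_abs m (q - Z n) - madic_abs m (R n - Z n)\<bar>) \<longlonglongrightarrow> 0"
    by (intro tendsto_sandwich[OF _ _ tendsto_const R(2)]) simp_all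
  then have "(\<lambda>n. madic_abs m (q - Z n) - madic_abs m (R n - Z n)) \<longlonglongrightarrow> 0"
    by (rule tendsto_rabs_zero_cancel)
  from Lim_transform[OF lim this] show ?thesis unfolding Z_def .
qed

definition mseries :: "int \<Rightarrow> (nat \<Rightarrow> int) \<Rightarrow> nat \<Rightarrow> rat" where
  "mseries m s N = (\<Sum>n<N. (of_int m / (of_int m + 1)) ^ n * of_int (s n))"

lemma qm_series_eq_iff_mseries:
  "qm_series_eq m s A \<longleftrightarrow> (\<lambda>N. qm_dist m (qm_of m (mseries m s N)) A) \<longlonglongrightarrow> 0"
  unfolding qm_series_eq_def mseries_def ..

lemma mseries_diff: "mseries m (\<lambda>n. f n - g n) N = mseries m f N - mseries m g N"
  unfolding mseries_def by (simp add: sum_subtractf algebra_simps)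

lemma inD_mseries: "m \<ge> 0 \<Longrightarrow> inD m (mseries m s N)"
  unfolding mseries_def mval_ge_0_iff[symmetric]
  by (intro mval_ge_sum mval_ge_mono[OF _ mval_ge_digit_term]) auto

lemma mseries_add_carry:
  assumes "m \<ge> 2"
  shows "mseries m sa N + mseries m sb N
    = mseries m (\<lambda>n. (sa n + sb n + carry m sa sb n) mod m) N
      + (of_int m / (of_int m + 1)) ^ N * of_int ((m + 1) * carry m sa sb N)"
proof (induction N)
  case (Suc N)
  let ?r = "of_int m / (of_int m + 1) :: rat"
  let ?k = "carry m sa sb N" and ?K = "carry m sa sb (Suc N)" and ?s = "sa N + sb N"
  have carry_Suc: "?K = ?k + (?s + ?k) div m"
    unfolding carry.simps(2) floor_divide_of_int_eq ..
  have "?s + (m + 1) * ?k = (?s + ?k) mod m + m * ?K"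
    unfolding carry_Suc using div_mult_mod_eq[of "?s + ?k" m] by (simp add: algebra_simps)
  then have "?r ^ N * of_int (?s + (m + 1) * ?k)
      = ?r ^ N * of_int ((?s + ?k) mod m) + (?r ^ N * of_int m) * of_int ?K"
    by (simp del: carry.simps add: algebra_simps)
  also have "?r ^ N * of_int m = ?r ^ Suc N * (of_int m + 1)"
    using assms by simp
  finally have step: "?r ^ N * of_int (?s + (m + 1) * ?k)
      = ?r ^ N * of_int ((?s + ?k) mod m) + ?r ^ Suc N * of_int ((m + 1) * ?K)"
    by (simp del: carry.simps add: mult.assoc)
  let ?d = "\<lambda>n. (sa n + sb n + carry m sa sb n) mod m"
  have "mseries m sa (Suc N) + mseries m sb (Suc N) = mseries m sa N + mseries m sb N + ?r ^ N * of_int ?s"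
    by (simp add: mseries_def algebra_simps)
  also have "\<dots> = mseries m ?d N + ?r ^ N * of_int (?s + (m + 1) * ?k)"
    unfolding Suc.IH by (simp del: carry.simps add: algebra_simps)
  also have "\<dots> = mseries m ?d (Suc N) + ?r ^ Suc N * of_int ((m + 1) * ?K)"
    unfolding step by (simp del: carry.simps add: mseries_def)
  finally show ?case .
qed (simp add: mseries_def)

lemma not_mval_ge_Suc_digit_term:
  assumes "m \<ge> 2" "e \<noteq> 0" "\<bar>e\<bar> < m"
  shows "\<not> mval_ge m (Suc k) ((of_int m / (of_int m + 1)) ^ k * of_int e)"
proof
  assume "mval_ge m (Suc k) ((of_int m / (of_int m + 1)) ^ k * of_int e)"
  then obtain y where y: "inD m y" "(of_int m / (of_int m + 1)) ^ k * of_int e = of_int m ^ Suc k * y"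
    unfolding mval_ge_def by blast
  have "of_int m ^ k * of_int e = of_int m ^ k * (of_int m * ((of_int m + 1) ^ k * y))"
    using y(2) assms(1) by (simp add: power_divide field_simps)
  then have "of_int e = of_int m * ((of_int m + 1) ^ k * y)"
    using assms(1) by simp
  moreover have "inD m ((of_int m + 1) ^ k * y)"
    using inD_mult inD_power inD_of_int[of m "m + 1"] y(1) by (metis of_int_add of_int_1)
  ultimately have "m dvd e" by (rule dvd_if_of_int_eq_mult_inD[rotated])
  then show False using assms dvd_imp_le_int[of e m] by simp
qed

lemma madic_abs_mseries_first_nonzero:
  assumes "m \<ge> 2" "\<And>n. n < k \<Longrightarrow> e n = 0" "e k \<noteq> 0" "\<bar>e k\<bar> < m" "k < N"
  shows "madic_abs m (mseries m e N) = (1 / real_of_int m) ^ k"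
proof -
  let ?r = "of_int m / (of_int m + 1) :: rat"
  let ?lead = "?r ^ k * of_int (e k)"
  have split: "mseries m e N = mseries m (e(k := 0)) N + ?lead"
  proof -
    have "mseries m e N = (\<Sum>n<N. ?r ^ n * of_int ((e(k := 0)) n) + (if n = k then ?lead else 0))"
      unfolding mseries_def by (rule sum.cong) auto
    then show ?thesis using assms(5) by (simp add: sum.distrib mseries_def)
  qed
  have tail: "mval_ge m (Suc k) (mseries m (e(k := 0)) N)"
    unfolding mseries_def
  proof (rule mval_ge_sum)
    fix n
    show "mval_ge m (Suc k) (?r ^ n * of_int ((e(k := 0)) n))"
    proof (cases "n \<le> k")
      case True
      then have "(e(k := 0)) n = 0" using assms(2) by (cases "n = k") auto
      then show ?thesis using mval_ge_zero by simp
    next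
      case False
      then show ?thesis using mval_ge_mono[of "Suc k" n] mval_ge_digit_term assms(1) by simp
    qed
  qed
  have "mval_ge m k (mseries m e N)"
    unfolding split using assms(1) by (intro mval_ge_add mval_ge_mono[OF _ tail] mval_ge_digit_term) auto
  moreover have "\<not> mval_ge m (Suc k) (mseries m e N)"
    using mval_ge_diff[OF _ tail] not_mval_ge_Suc_digit_term[OF assms(1,3,4)] unfolding split by force
  ultimately show ?thesis by (rule madic_abs_eq_if_exact_mval)
qed

lemma digit_eq_zero_if_mseries_tendsto_zero:
  assumes "m \<ge> 2" "\<And>n. \<bar>e n\<bar> < m" "(\<lambda>N. madic_abs m (mseries m e N)) \<longlonglongrightarrow> 0"
  shows "e n = 0"
proof (rule ccontr)
  assume "e n \<noteq> 0"
  define k where "k = (LEAST k. e k \<noteq> 0)"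
  have "e k \<noteq> 0" "\<And>j. j < k \<Longrightarrow> e j = 0"
    unfolding k_def using LeastI[of "\<lambda>k. e k \<noteq> 0", OF \<open>e n \<noteq> 0\<close>] not_less_Least by blast+
  then have "\<forall>\<^sub>F N in sequentially. (1 / real_of_int m) ^ k = madic_abs m (mseries m e N)"
    using madic_abs_mseries_first_nonzero[OF assms(1), of k e] assms(2)
    by (intro eventually_sequentiallyI[of "Suc k"]) (simp add: Suc_le_eq)
  then have "(\<lambda>N. madic_abs m (mseries m e N)) \<longlonglongrightarrow> (1 / real_of_int m) ^ k"
    by (rule Lim_transform_eventually[OF tendsto_const])
  then have "(1 / real_of_int m) ^ k = 0" using assms(3) LIMSEQ_unique by blast
  then show False using assms(1) by simp
qed

lemma madic_abs_le_qm_dists_of_qm_add: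
  assumes "m \<ge> 2" "a \<in> Qm m" "b \<in> Qm m" "inD m p" "inD m q" "inD m r"
  shows "madic_abs m (r - (p + q))
    \<le> qm_dist m (qm_of m r) (qm_add m a b) + qm_dist m (qm_of m p) a + qm_dist m (qm_of m q) b"
proof -
  define A where "A = qm_rep a"
  define B where "B = qm_rep b"
  define C where "C = qm_rep (qm_add m a b)"
  have D: "inD m (A n)" "inD m (B n)" "inD m (C n)" for n
    unfolding A_def B_def C_def
    using mcauchy_inD mcauchy_qm_rep assms(2,3) qm_add_in_Qm[OF assms(1-3)] by blast+
  let ?bound = "\<lambda>n. madic_abs m (r - C n) + madic_abs m (A n + B n - C n)
    + madic_abs m (p - A n) + madic_abs m (q - B n)"
  have "?bound n \<ge> madic_abs m (r - (p + q))" for n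
  proof -
    have "r - (p + q) = (r - C n) + - (A n + B n - C n) + (A n - p) + (B n - q)"
      by simp
    also have "madic_abs m \<dots> \<le> madic_abs m (r - C n) + madic_abs m (- (A n + B n - C n))
        + madic_abs m (A n - p) + madic_abs m (B n - q)"
      using madic_abs_triangle[OF assms(1)] inD_add inD_diff inD_uminus D assms(4-6)
      by (smt (verit, del_insts))
    finally show ?thesis
      using madic_abs_uminus[OF inD_diff[OF inD_add]] madic_abs_diff_commute D assms(4,5) by simp
  qed
  moreover have "?bound \<longlonglongrightarrow> qm_dist m (qm_of m r) (qm_add m a b) + 0
      + qm_dist m (qm_of m p) a + qm_dist m (qm_of m q) b"
    unfolding A_def B_def C_def
    by (intro tendsto_add qm_rep_qm_add qm_dist_qm_of_tendsto qm_add_in_Qm assms)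
  ultimately show ?thesis by (intro LIMSEQ_le_const) auto
qed

lemma mseries_qm_add_residual_tendsto_zero:
  assumes "m \<ge> 2" "a \<in> Qm m" "b \<in> Qm m"
    and "qm_series_eq m sa a" "qm_series_eq m sb b" "qm_series_eq m sc (qm_add m a b)"
  shows "(\<lambda>N. madic_abs m (mseries m sc N - (mseries m sa N + mseries m sb N))) \<longlonglongrightarrow> 0"
proof (rule tendsto_sandwich[OF _ _ tendsto_const])
  have "(\<lambda>N. qm_dist m (qm_of m (mseries m sc N)) (qm_add m a b) + qm_dist m (qm_of m (mseries m sa N)) a
      + qm_dist m (qm_of m (mseries m sb N)) b) \<longlonglongrightarrow> 0 + 0 + 0"
    using assms(4-6) unfolding qm_series_eq_iff_mseries by (intro tendsto_add)
  then show "(\<lambda>N. qm_dist m (qm_of m (mseries m sc N)) (qm_add m a b) + qm_dist m (qm_of m (mseries m sa N)) a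
      + qm_dist m (qm_of m (mseries m sb N)) b) \<longlonglongrightarrow> 0" by simp
  show "\<forall>\<^sub>F N in sequentially. madic_abs m (mseries m sc N - (mseries m sa N + mseries m sb N))
      \<le> qm_dist m (qm_of m (mseries m sc N)) (qm_add m a b) + qm_dist m (qm_of m (mseries m sa N)) a
        + qm_dist m (qm_of m (mseries m sb N)) b"
    using assms(1) by (intro always_eventually allI madic_abs_le_qm_dists_of_qm_add assms inD_mseries) auto
qed (use assms(1) madic_abs_nonneg in auto)

lemma mseries_carry_digits_tendsto_zero:
  assumes "m \<ge> 2"
    and "(\<lambda>N. madic_abs m (mseries m sc N - (mseries m sa N + mseries m sb N))) \<longlonglongrightarrow> 0"
  shows "(\<lambda>N. madic_abs m (mseries m (\<lambda>n. sc n - (sa n + sb n + carry m sa sb n) mod m) N)) \<longlonglongrightarrow> 0"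
proof (rule tendsto_sandwich[OF _ _ tendsto_const])
  have "(\<lambda>N. madic_abs m (mseries m sc N - (mseries m sa N + mseries m sb N)) + (1 / real_of_int m) ^ N)
      \<longlonglongrightarrow> 0 + 0"
    using assms by (intro tendsto_add LIMSEQ_power_zero) auto
  then show "(\<lambda>N. madic_abs m (mseries m sc N - (mseries m sa N + mseries m sb N)) + (1 / real_of_int m) ^ N)
      \<longlonglongrightarrow> 0" by simp
  show "\<forall>\<^sub>F N in sequentially.
      madic_abs m (mseries m (\<lambda>n. sc n - (sa n + sb n + carry m sa sb n) mod m) N)
      \<le> madic_abs m (mseries m sc N - (mseries m sa N + mseries m sb N)) + (1 / real_of_int m) ^ N"
  proof (intro always_eventually allI)
    fix N
    let ?res = "mseries m sc N - (mseries m sa N + mseries m sb N)"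
    let ?tail = "(of_int m / (of_int m + 1)) ^ N * of_int ((m + 1) * carry m sa sb N) :: rat"
    have tail: "mval_ge m N ?tail" using assms(1) by (intro mval_ge_digit_term) simp
    have "mseries m (\<lambda>n. sc n - (sa n + sb n + carry m sa sb n) mod m) N = ?res + ?tail"
      unfolding mseries_diff mseries_add_carry[OF assms(1)] by simp
    also have "madic_abs m (?res + ?tail) \<le> madic_abs m ?res + madic_abs m ?tail"
      using assms(1) by (intro madic_abs_triangle inD_diff inD_add inD_mseries mval_ge_imp_inD[OF tail]) auto
    also have "\<dots> \<le> madic_abs m ?res + (1 / real_of_int m) ^ N"
      using madic_abs_le_if_mval_ge[OF assms(1) tail] by simp
    finally show "madic_abs m (mseries m (\<lambda>n. sc n - (sa n + sb n + carry m sa sb n) mod m) N)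
        \<le> madic_abs m ?res + (1 / real_of_int m) ^ N" .
  qed
qed (use assms(1) madic_abs_nonneg in auto)

theorem mainTheorem12:
  fixes m :: int and a b c :: "(nat \<Rightarrow> rat) set" and sa sb sc :: "nat \<Rightarrow> int"
  assumes "m \<ge> 2"
    and "a \<in> Qm m" and "b \<in> Qm m" and "c = qm_add m a b"
    and "\<And>n. 0 \<le> sa n \<and> sa n \<le> m - 1"
    and "\<And>n. 0 \<le> sb n \<and> sb n \<le> m - 1"
    and "\<And>n. 0 \<le> sc n \<and> sc n \<le> m - 1"
    and "qm_series_eq m sa a" and "qm_series_eq m sb b" and "qm_series_eq m sc c"
  shows "\<forall>n. [sc n = sa n + sb n + carry m sa sb n] (mod m)"
proof
  fix n
  let ?d = "\<lambda>n. (sa n + sb n + carry m sa sb n) mod m"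
  have "(\<lambda>N. madic_abs m (mseries m (\<lambda>n. sc n - ?d n) N)) \<longlonglongrightarrow> 0"
    using assms by (intro mseries_carry_digits_tendsto_zero mseries_qm_add_residual_tendsto_zero) auto
  moreover have "\<bar>sc k - ?d k\<bar> < m" for k
  proof -
    have "0 \<le> ?d k" "?d k < m" using assms(1) by simp_all
    then show ?thesis using assms(7)[of k] by linarith
  qed
  ultimately have "sc n - ?d n = 0"
    by (rule digit_eq_zero_if_mseries_tendsto_zero[OF assms(1), where e = "\<lambda>n. sc n - ?d n", rotated])
  then show "[sc n = sa n + sb n + carry m sa sb n] (mod m)"
    by (simp add: cong_def)
qed

end
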